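(* Let $N=3$, $L\ge1$, and let $R_{12}(\xi_1,\xi_2)=\sum_{i=1}^3 a_i(\xi_1,\xi_2)e^{(ii)}_1\otimes e^{(ii)}_2+\sum_{i\ne j}b_{ij}(\xi_1,\xi_2)e^{(ii)}_1\otimes e^{(jj)}_2+\sum_{i\ne j}c_{ij}(\xi_1,\xi_2)e^{(ij)}_1\otimes e^{(ji)}_2$ be an $R$-matrix on $\mathbb{C}^3\otimes\mathbb{C}^3$ with arbitrary weights satisfying the Yang–Baxter equation $R_{12}(\xi_1,\xi_2)R_{13}(\xi_1,\xi_3)R_{23}(\xi_2,\xi_3)=R_{23}(\xi_2,\xi_3)R_{13}(\xi_1,\xi_3)R_{12}(\xi_1,\xi_2)$ and unitarity $R_{12}(\xi_1,\xi_2)R_{21}(\xi_2,\xi_1)=\mathcal I\otimes\mathcal I$. Let $\mathcal T_{a,1\dots L}(\mu)=R_{aL}(\mu,\xi_L)R_{a(L-1)}(\mu,\xi_{L-1})\cdots R_{a1}(\mu,\xi_1)$ be the monodromy matrix, regarded as a $3\times3$ matrix in the auxiliary space $\mathcal A_a$ with operator entries on $V_1\otimes\cdots\otimes V_L$, and let $D_{1\dots L}(\mu)$ be its $(3,3)$ entry. Let $$\mathcal F_{1\dots L}=\sum_{\sigma\in S_L}\ \sum^{*}_{1\le\alpha_{\sigma(1)},\dots,\alpha_{\sigma(L)}\le 3}\ \bigotimes_{i=1}^L e^{(\alpha_i\alpha_i)}_i\ R^{\{\sigma\}}_{1\dots L},$$ where the starred sum is over sequences with $\alpha_{\sigma(i)}\le\alpha_{\sigma(i+1)}$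 when $\sigma(i)<\sigma(i+1)$ and $\alpha_{\sigma(i)}<\alpha_{\sigma(i+1)}$ when $\sigma(i)>\sigma(i+1)$. Then $$\mathcal F_{1\dots L}\,D_{1\dots L}(\mu)=\Big(\bigotimes_{i=1}^L\mathrm{diag}\{b_{31}(\mu,\xi_i),\,b_{32}(\mu,\xi_i),\,a_3(\mu,\xi_i)\}_i\Big)\,\mathcal F_{1\dots L};$$ in particular, when $\mathcal F_{1\dots L}$ is invertible, the twisted operator $\tilde D_{1\dots L}(\mu)=\mathcal F_{1\dots L}D_{1\dots L}(\mu)\mathcal F^{-1}_{1\dots L}$ equals $\bigotimes_{i=1}^L\mathrm{diag}\{b_{31}(\mu,\xi_i),b_{32}(\mu,\xi_i),a_3(\mu,\xi_i)\}_i$.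
   Context: $e^{(\alpha\beta)}_j$ is the $3\times3$ Weyl matrix (1 in entry $(\alpha,\beta)$) acting on the $j$-th factor $V_j\cong\mathbb{C}^3$; $\mathrm{diag}\{x,y,z\}_i$ is the diagonal $3\times 3$ matrix acting on $V_i$. $R_{jk}$ denotes the $R$-matrix acting on factors $j,k$ with parameters $\xi_j,\xi_k$ (with $\mu$ for the auxiliary space $a$); $P_{\alpha(\alpha+1)}$ permutes the factors $V_\alpha,V_{\alpha+1}$. For $\sigma=\sigma_{\alpha_p(\alpha_p+1)}\cdots\sigma_{\alpha_1(\alpha_1+1)}$ a minimal decomposition into adjacent transpositions, $R^{\{\sigma\}}_{1\dots L}=P_{\alpha_p(\alpha_p+1)}\cdots P_{\alpha_1(\alpha_1+1)}\hat R_{\alpha_1}\cdots\hat R_{\alpha_p}$ with $\hat R_\alpha=P_{\alpha(\alpha+1)}R_{\alpha(\alpha+1)}(\xi_\alpha,\xi_{\alpha+1})$; $R^{\{\mathrm{id}\}}$ is the identity. *)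

theory Defs
  imports Complex_Main "HOL-Combinatorics.Permutations"
begin

(* A basis state of the tensor
   product of copies of C^3 indexed by a finite set I of sites is a function
   s : I -> {1,2,3} (extensional).  An operator is given by its matrix entries
   A s t = <s| A |t>. *)

type_synonym state = "nat \<Rightarrow> nat"
type_synonym op = "state \<Rightarrow> state \<Rightarrow> complex"

definition states :: "nat set \<Rightarrow> state set" where
  "states I = (\<Pi>\<^sub>E i\<in>I. {1,2,3})"

definition opmult :: "nat set \<Rightarrow> op \<Rightarrow> op \<Rightarrow> op" where
  "opmult I A B = (\<lambda>s t. \<Sum>u\<in>states I. A s u * B u t)"

definition opid :: op where
  "opid = (\<lambda>s t. if s = t then 1 else 0)"

definition opeq :: "nat set \<Rightarrow> op \<Rightarrow> op \<Rightarrow> bool" where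
  "opeq I A B \<longleftrightarrow> (\<forall>s\<in>states I. \<forall>t\<in>states I. A s t = B s t)"

(* local R-matrix entries <al be| R(x,y) |ga de> on C^3 (x) C^3:
   R = sum_i a_i e^(ii)(x)e^(ii) + sum_{i<>j} b_ij e^(ii)(x)e^(jj) + sum_{i<>j} c_ij e^(ij)(x)e^(ji) *)
definition Rloc ::
  "(nat \<Rightarrow> complex \<Rightarrow> complex \<Rightarrow> complex) \<Rightarrow>
   (nat \<Rightarrow> nat \<Rightarrow> complex \<Rightarrow> complex \<Rightarrow> complex) \<Rightarrow>
   (nat \<Rightarrow> nat \<Rightarrow> complex \<Rightarrow> complex \<Rightarrow> complex) \<Rightarrow>
   complex \<Rightarrow> complex \<Rightarrow> nat \<Rightarrow> nat \<Rightarrow> nat \<Rightarrow> nat \<Rightarrow> complex" where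
  "Rloc a b c x y al be ga de =
     (if al = be \<and> be = ga \<and> ga = de then a al x y
      else if al = ga \<and> be = de then b al be x y
      else if al = de \<and> be = ga then c al be x y
      else 0)"

(* a two-site operator M acting on factors j,k (first tensor slot on factor j) *)
definition emb :: "nat set \<Rightarrow> nat \<Rightarrow> nat \<Rightarrow> (nat \<Rightarrow> nat \<Rightarrow> nat \<Rightarrow> nat \<Rightarrow> complex) \<Rightarrow> op" where
  "emb I j k M = (\<lambda>s t. if (\<forall>i\<in>I - {j,k}. s i = t i) then M (s j) (s k) (t j) (t k) else 0)"

definition Rop where
  "Rop a b c I j k x y = emb I j k (Rloc a b c x y)"

definition Pop :: "nat \<Rightarrow> nat \<Rightarrow> op" where
  "Pop j k = (\<lambda>s t. if s = t \<circ> Transposition.transpose j k then 1 else 0)"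

definition YBE where
  "YBE a b c \<longleftrightarrow> (\<forall>x1 x2 x3.
     opeq {1,2,3}
       (opmult {1,2,3} (opmult {1,2,3} (Rop a b c {1,2,3} 1 2 x1 x2) (Rop a b c {1,2,3} 1 3 x1 x3))
          (Rop a b c {1,2,3} 2 3 x2 x3))
       (opmult {1,2,3} (opmult {1,2,3} (Rop a b c {1,2,3} 2 3 x2 x3) (Rop a b c {1,2,3} 1 3 x1 x3))
          (Rop a b c {1,2,3} 1 2 x1 x2)))"

definition unitary_R where
  "unitary_R a b c \<longleftrightarrow> (\<forall>x1 x2.
     opeq {1,2} (opmult {1,2} (Rop a b c {1,2} 1 2 x1 x2) (Rop a b c {1,2} 2 1 x2 x1)) opid)"

(* Monodromy matrix on A_a (x) V_1 (x) ... (x) V_n, auxiliary space = site 0: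
   T(mu) = R_{a n}(mu,xi_n) ... R_{a 1}(mu,xi_1), computed in the space of sites {0..L} *)
fun monodromy where
  "monodromy a b c L xi mu 0 = opid"
| "monodromy a b c L xi mu (Suc n) =
     opmult {0..L} (Rop a b c {0..L} 0 (Suc n) mu (xi (Suc n))) (monodromy a b c L xi mu n)"

definition Dop where
  "Dop a b c L xi mu = (\<lambda>s t. monodromy a b c L xi mu L (s(0 := 3)) (t(0 := 3)))"

(* sigma = sigma_{al_p(al_p+1)} o ... o sigma_{al_1(al_1+1)} for the word [al_1,...,al_p] *)
definition word_perm :: "nat list \<Rightarrow> nat \<Rightarrow> nat" where
  "word_perm w = fold (\<lambda>al f. Transposition.transpose al (Suc al) \<circ> f) w id"

definition reduced_word :: "nat \<Rightarrow> nat list \<Rightarrow> (nat \<Rightarrow> nat) \<Rightarrow> bool" where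
  "reduced_word L w \<sigma> \<longleftrightarrow> set w \<subseteq> {1..<L} \<and> word_perm w = \<sigma> \<and>
     (\<forall>w'. set w' \<subseteq> {1..<L} \<and> word_perm w' = \<sigma> \<longrightarrow> length w \<le> length w')"

(* hat R_al = P_{al(al+1)} R_{al(al+1)}, where the spectral parameters are those
   carried by the factors currently sitting in positions al, al+1; pos maps a
   position to the label of the factor currently sitting there *)
definition hatR where
  "hatR a b c I xi al (pos :: nat \<Rightarrow> nat) =
     opmult I (Pop al (Suc al)) (Rop a b c I al (Suc al) (xi (pos al)) (xi (pos (Suc al))))"

(* hatprod [al_p, ..., al_1] id = hat R_{al_1} ... hat R_{al_p}  (hat R_{al_p} acts first) *)
fun hatprod where
  "hatprod a b c I xi [] pos = opid"
| "hatprod a b c I xi (al # rest) pos =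
     opmult I (hatprod a b c I xi rest (pos \<circ> Transposition.transpose al (Suc al))) (hatR a b c I xi al pos)"

fun pprod where
  "pprod I [] = opid"
| "pprod I (al # rest) = opmult I (pprod I rest) (Pop al (Suc al))"

definition Rword where
  "Rword a b c I xi w = opmult I (pprod I w) (hatprod a b c I xi (rev w) id)"

definition Rsigma where
  "Rsigma a b c L xi \<sigma> = Rword a b c {1..L} xi (SOME w. reduced_word L w \<sigma>)"

definition proj :: "state \<Rightarrow> op" where
  "proj al = (\<lambda>s t. if s = al \<and> t = al then 1 else 0)"

definition admissible :: "nat \<Rightarrow> (nat \<Rightarrow> nat) \<Rightarrow> state \<Rightarrow> bool" where
  "admissible L \<sigma> al \<longleftrightarrow> (\<forall>i\<in>{1..<L}.
      (\<sigma> i < \<sigma> (Suc i) \<longrightarrow> al (\<sigma> i) \<le> al (\<sigma> (Suc i))) \<and>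
      (\<sigma> i > \<sigma> (Suc i) \<longrightarrow> al (\<sigma> i) < al (\<sigma> (Suc i))))"

definition Fop where
  "Fop a b c L xi = (\<lambda>s t. \<Sum>\<sigma>\<in>{\<sigma>. \<sigma> permutes {1..L}}.
      \<Sum>al\<in>{al\<in>states {1..L}. admissible L \<sigma> al}. opmult {1..L} (proj al) (Rsigma a b c L xi \<sigma>) s t)"

definition diagloc where
  "diagloc a b mu x v = (if v = 1 then b 3 1 mu x else if v = 2 then b 3 2 mu x else a 3 mu x)"

definition Diagop where
  "Diagop a b L xi mu = (\<lambda>s t. if s = t then (\<Prod>i\<in>{1..L}. diagloc a b mu (xi i) (s i)) else 0)"

end

theory Submission
  imports Defs
begin

(*
  For every word of a permutation sigma, the operator R^sigma built from it intertwines D(mu)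
  with the (3,3) entry D_sigma(mu) of the monodromy matrix R_{a sigma(L)} ... R_{a sigma(1)}, whose
  sites are visited in the order sigma(L), ..., sigma(1): each letter of the word contributes a
  factor P R, which moves through the monodromy matrix by the RLL relation (the Yang-Baxter
  equation), and the permutations P relabel the sites.

  By the ice rule, the entries of R only permute the pair (auxiliary index, site index).
  On a basis state alpha admissible for sigma the values alpha(sigma(1)) <= ... <= alpha(sigma(L))
  weakly increase, so once the auxiliary index 3 has been lowered to some alpha(j) < 3 it can never
  return to 3. Hence <alpha| D_sigma = <alpha| prod_i R(mu, xi_i)_{3 alpha(i), 3 alpha(i)}, which is the
  eigenvalue of the diagonal operator, and summing over sigma and the admissible alpha gives
  F D = (diag x ... x diag) F.
*)

lemma mult_if_zero_right: "(x :: complex) * (if P then y else 0) = (if P then x * y else 0)"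
  by simp

lemma sum_if_zero: "(\<Sum>x\<in>S. if P then f x else 0) = (if P then \<Sum>x\<in>S. f x else (0 :: complex))"
  by simp

lemma sum_mult_if_eq:
  fixes F :: "nat \<Rightarrow> complex"
  assumes "c \<in> {1,2,3}"
  shows "(\<Sum>h\<in>{1,2,3}. F h * (if h = c \<and> P then R else 0)) = (if P then F c * R else 0)"
proof -
  have "(\<Sum>h\<in>{1,2,3}. F h * (if h = c \<and> P then R else 0)) = (\<Sum>h\<in>{1,2,3}. if h = c then (if P then F h * R else 0) else 0)"
    by (intro sum.cong) auto
  also have "\<dots> = (if P then F c * R else 0)"
    using assms by (subst sum.delta) auto
  finally show ?thesis .
qed

lemma sum2_mult_if_eq:
  fixes F :: "nat \<Rightarrow> nat \<Rightarrow> complex"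
  assumes "c \<in> {1,2,3}" "d \<in> {1,2,3}"
  shows "(\<Sum>g\<in>{1,2,3}. \<Sum>h\<in>{1,2,3}. F g h * (if g = c \<and> h = d \<and> P then R else 0)) = (if P then F c d * R else 0)"
proof -
  have inner: "(\<Sum>h\<in>{1,2,3}. F g h * (if g = c \<and> h = d \<and> P then R else 0)) = (if g = c then (if P then F g d * R else 0) else 0)" for g
    by (cases "g = c") (simp_all only: simp_thms if_True if_False mult_zero_right sum.neutral_const sum_mult_if_eq[OF assms(2)])
  show ?thesis
    unfolding inner using assms(1) by (subst sum.delta) auto
qed

lemma sum2_mult_if_eq_outer:
  fixes F :: "nat \<Rightarrow> nat \<Rightarrow> complex"
  assumes "c \<in> {1,2,3}"
  shows "(\<Sum>g\<in>{1,2,3}. \<Sum>h\<in>{1,2,3}. F g h * (if g = c \<and> P then G h else 0)) =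
    (if P then \<Sum>h\<in>{1,2,3}. F c h * G h else 0)"
proof -
  have "(\<Sum>h\<in>{1,2,3}. F g h * (if g = c \<and> P then G h else 0)) =
      (if g = c then (if P then \<Sum>h\<in>{1,2,3}. F g h * G h else 0) else 0)" for g
    by (cases "g = c"; cases P) simp_all
  then show ?thesis using assms by (simp only:) (subst sum.delta, auto)
qed

lemma sum2_single:
  fixes f :: "nat \<Rightarrow> nat \<Rightarrow> complex"
  assumes "m0 \<in> {1,2,3}" "h0 \<in> {1,2,3}"
    and "\<And>m h. m \<in> {1,2,3} \<Longrightarrow> h \<in> {1,2,3} \<Longrightarrow> \<not> (m = m0 \<and> h = h0) \<Longrightarrow> f m h = 0"
  shows "(\<Sum>m\<in>{1,2,3}. \<Sum>h\<in>{1,2,3}. f m h) = f m0 h0"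
proof -
  have "(\<Sum>m\<in>{1,2,3}. \<Sum>h\<in>{1,2,3}. f m h) = (\<Sum>m\<in>{1,2,3}. if m = m0 then (\<Sum>h\<in>{1,2,3}. if h = h0 then f m h else 0) else 0)"
    using assms(3) by (intro sum.cong refl) auto
  then show ?thesis
    using assms(1,2) by (simp only: sum.delta' finite.intros) simp
qed

lemma sum3_rearrange:
  fixes A B C :: "nat \<Rightarrow> nat \<Rightarrow> complex"
  shows "(\<Sum>g\<in>S. \<Sum>h\<in>S. (\<Sum>m\<in>S. A m h * B m g) * C h g) = (\<Sum>m\<in>S. \<Sum>h\<in>S. A m h * (\<Sum>g\<in>S. B m g * C h g))"
proof -
  have "(\<Sum>g\<in>S. \<Sum>h\<in>S. (\<Sum>m\<in>S. A m h * B m g) * C h g) = (\<Sum>g\<in>S. \<Sum>h\<in>S. \<Sum>m\<in>S. A m h * B m g * C h g)"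
    by (simp add: sum_distrib_right)
  also have "\<dots> = (\<Sum>m\<in>S. \<Sum>h\<in>S. \<Sum>g\<in>S. A m h * B m g * C h g)"
    by (subst sum.swap, subst (2) sum.swap) (rule sum.cong[OF refl], rule sum.swap)
  also have "\<dots> = (\<Sum>m\<in>S. \<Sum>h\<in>S. A m h * (\<Sum>g\<in>S. B m g * C h g))"
    by (simp add: sum_distrib_left mult.assoc)
  finally show ?thesis .
qed

lemma mem_states_iff:
  "s \<in> states I \<longleftrightarrow> (\<forall>i\<in>I. s i \<in> {1,2,3}) \<and> (\<forall>i. i \<notin> I \<longrightarrow> s i = undefined)"
  unfolding states_def PiE_iff extensional_def by auto

lemma finite_states: "finite I \<Longrightarrow> finite (states I)"
  unfolding states_def by (rule finite_PiE) auto

lemma states_range: "s \<in> states I \<Longrightarrow> i \<in> I \<Longrightarrow> s i \<in> {1,2,3}"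
  by (simp add: mem_states_iff)

lemma fun_upd_in_states: "s \<in> states I \<Longrightarrow> j \<in> I \<Longrightarrow> h \<in> {1,2,3} \<Longrightarrow> s(j := h) \<in> states I"
  by (simp add: mem_states_iff)

lemma states_agree_outside:
  assumes "s \<in> states I" "u \<in> states I" "\<forall>i\<in>I - J. s i = u i" "i \<notin> J"
  shows "s i = u i"
  using assms by (cases "i \<in> I") (auto simp: mem_states_iff)

lemma states_eq_fun_upd:
  assumes "s \<in> states I" "u \<in> states I" "\<forall>i\<in>I - {j}. s i = u i"
  shows "u = s(j := u j)"
  using states_agree_outside[OF assms] by (auto simp: fun_eq_iff)

lemma states_eq_fun_upd2:
  assumes "s \<in> states I" "u \<in> states I" "\<forall>i\<in>I - {j, k}. s i = u i"
  shows "u = s(j := u j, k := u k)"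
  using states_agree_outside[OF assms] by (auto simp: fun_eq_iff)

lemma sum_states_reindex:
  assumes "finite I" "inj_on m A" "m ` A \<subseteq> states I"
    and "\<And>u. u \<in> states I \<Longrightarrow> u \<notin> m ` A \<Longrightarrow> F u = 0"
  shows "(\<Sum>u\<in>states I. F u) = (\<Sum>x\<in>A. F (m x))"
proof -
  have "(\<Sum>x\<in>A. F (m x)) = (\<Sum>u\<in>m ` A. F u)"
    using sum.reindex[OF assms(2), of F] by simp
  also have "\<dots> = (\<Sum>u\<in>states I. F u)"
    using assms by (intro sum.mono_neutral_left finite_states) auto
  finally show ?thesis ..
qed

lemma opmult_assoc: "opmult I (opmult I A B) C = opmult I A (opmult I B C)"
  unfolding opmult_def
  by (auto simp: fun_eq_iff sum_distrib_left sum_distrib_right mult.assoc intro: sum.swap)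

definition opsum :: "'a set \<Rightarrow> ('a \<Rightarrow> op) \<Rightarrow> op" where
  "opsum P F = (\<lambda>s t. \<Sum>p\<in>P. F p s t)"

lemma opmult_opsum_right: "opmult I A (opsum P F) = opsum P (\<lambda>p. opmult I A (F p))"
  unfolding opmult_def opsum_def by (auto simp: fun_eq_iff sum_distrib_left intro: sum.swap)

lemma opmult_opsum_left: "opmult I (opsum P F) B = opsum P (\<lambda>p. opmult I (F p) B)"
  unfolding opmult_def opsum_def by (auto simp: fun_eq_iff sum_distrib_right intro: sum.swap)

lemma opsum_swap: "opsum P (\<lambda>p. opsum Q (F p)) = opsum Q (\<lambda>q. opsum P (\<lambda>p. F p q))"
  unfolding opsum_def by (auto simp: fun_eq_iff intro: sum.swap)

lemma opsum_delta_left: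
  assumes "k \<in> P" "finite P"
  shows "opsum P (\<lambda>m. opmult I (if k = m then A else (\<lambda>s t. 0)) (B m)) = opmult I A (B k)"
proof -
  have "opmult I (if k = m then A else (\<lambda>s t. 0)) (B m) s t = (if k = m then opmult I A (B m) s t else 0)" for m s t
    by (simp add: opmult_def)
  then show ?thesis using assms by (simp add: opsum_def fun_eq_iff)
qed

lemma opsum_delta_right:
  assumes "l \<in> P" "finite P"
  shows "opsum P (\<lambda>m. opmult I (A m) (if m = l then B else (\<lambda>s t. 0))) = opmult I (A l) B"
proof -
  have "opmult I (A m) (if m = l then B else (\<lambda>s t. 0)) s t = (if m = l then opmult I (A m) B s t else 0)" for m s t
    by (simp add: opmult_def)
  then show ?thesis using assms by (simp add: opsum_def fun_eq_iff)
qed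

lemma opeq_refl [simp]: "opeq I A A"
  by (simp add: opeq_def)

lemma opeq_sym: "opeq I A B \<Longrightarrow> opeq I B A"
  by (simp add: opeq_def)

lemma opeq_trans [trans]: "opeq I A B \<Longrightarrow> opeq I B C \<Longrightarrow> opeq I A C"
  by (simp add: opeq_def)

lemma opeq_eq_trans [trans]: "opeq I A B \<Longrightarrow> B = C \<Longrightarrow> opeq I A C"
  by simp

lemma eq_opeq_trans [trans]: "A = B \<Longrightarrow> opeq I B C \<Longrightarrow> opeq I A C"
  by simp

lemma opeq_opmult: "opeq I A A' \<Longrightarrow> opeq I B B' \<Longrightarrow> opeq I (opmult I A B) (opmult I A' B')"
  unfolding opeq_def opmult_def by (auto intro!: sum.cong)

lemma opeq_opsum: "(\<And>p. p \<in> P \<Longrightarrow> opeq I (F p) (G p)) \<Longrightarrow> opeq I (opsum P F) (opsum P G)"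
  unfolding opeq_def opsum_def by (auto intro!: sum.cong)

lemma opmult_opid_left: "finite I \<Longrightarrow> opeq I (opmult I opid A) A"
  unfolding opeq_def opmult_def opid_def by (simp add: finite_states if_distrib[of "\<lambda>x. x * _"] cong: if_cong)

lemma opmult_opid_right: "finite I \<Longrightarrow> opeq I (opmult I A opid) A"
  unfolding opeq_def opmult_def opid_def by (simp add: finite_states if_distrib[of "\<lambda>x. _ * x"] cong: if_cong)

definition site_op :: "nat set \<Rightarrow> nat \<Rightarrow> (nat \<Rightarrow> nat \<Rightarrow> complex) \<Rightarrow> op" where
  "site_op I j M = (\<lambda>s t. if \<forall>i\<in>I - {j}. s i = t i then M (s j) (t j) else 0)"

lemma sum_site_op:
  assumes "finite I" "j \<in> I" "s \<in> states I"
  shows "(\<Sum>u\<in>states I. site_op I j M s u * f u) = (\<Sum>h\<in>{1,2,3}. M (s j) h * f (s(j := h)))"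
proof (subst sum_states_reindex[where m = "\<lambda>h. s(j := h)" and A = "{1,2,3}"])
  fix u assume u: "u \<in> states I" "u \<notin> (\<lambda>h. s(j := h)) ` {1,2,3}"
  have "u \<noteq> s(j := u j)" using u states_range[OF u(1) assms(2)] by blast
  then have "\<not> (\<forall>i\<in>I - {j}. s i = u i)"
    using states_eq_fun_upd[OF assms(3) u(1)] by blast
  then show "site_op I j M s u * f u = 0" by (auto simp: site_op_def)
qed (use assms in \<open>auto simp: inj_on_def fun_eq_iff mem_states_iff site_op_def\<close>)

lemma sum_emb:
  assumes "finite I" "j \<in> I" "k \<in> I" "j \<noteq> k" "s \<in> states I"
  shows "(\<Sum>u\<in>states I. emb I j k M s u * f u) =
         (\<Sum>g\<in>{1,2,3}. \<Sum>h\<in>{1,2,3}. M (s j) (s k) g h * f (s(j := g, k := h)))"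
proof -
  have "(\<Sum>u\<in>states I. emb I j k M s u * f u) =
        (\<Sum>(g,h)\<in>{1,2,3} \<times> {1,2,3}. emb I j k M s (s(j := g, k := h)) * f (s(j := g, k := h)))"
  proof (subst sum_states_reindex[where m = "\<lambda>(g,h). s(j := g, k := h)" and A = "{1,2,3} \<times> {1,2,3}"])
    fix u assume u: "u \<in> states I" "u \<notin> (\<lambda>(g,h). s(j := g, k := h)) ` ({1,2,3} \<times> {1,2,3})"
    have "u \<noteq> s(j := u j, k := u k)"
      using u states_range[OF u(1) assms(2)] states_range[OF u(1) assms(3)] by force
    then have "\<not> (\<forall>i\<in>I - {j, k}. s i = u i)"
      using states_eq_fun_upd2[OF assms(5) u(1)] by blast
    then show "emb I j k M s u * f u = 0" by (auto simp: emb_def)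
  qed (use assms in \<open>auto simp: inj_on_def fun_eq_iff mem_states_iff split_beta\<close>)
  also have "\<dots> = (\<Sum>g\<in>{1,2,3}. \<Sum>h\<in>{1,2,3}. M (s j) (s k) g h * f (s(j := g, k := h)))"
    using assms(4) by (simp add: sum.cartesian_product emb_def)
  finally show ?thesis .
qed

lemma sum_Pop:
  assumes "finite I" "j \<in> I" "k \<in> I" "s \<in> states I"
  shows "(\<Sum>u\<in>states I. Pop j k s u * f u) = f (s \<circ> Transposition.transpose j k)"
proof -
  let ?T = "Transposition.transpose j k"
  have "s = u \<circ> ?T \<longleftrightarrow> s \<circ> ?T = u" for u
    by (auto simp: fun_eq_iff transpose_def)
  then have "(\<Sum>u\<in>states I. Pop j k s u * f u) = (\<Sum>u\<in>states I. if s \<circ> ?T = u then f u else 0)"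
    by (intro sum.cong) (simp_all add: Pop_def)
  also have "\<dots> = f (s \<circ> ?T)"
  proof -
    have "s \<circ> ?T \<in> states I"
      using assms(2-4) unfolding mem_states_iff by (simp add: transpose_def)
    then show ?thesis using assms(1) by (simp add: finite_states)
  qed
  finally show ?thesis .
qed

lemma opmult_emb_site_op:
  assumes "finite I" "k \<in> I" "l \<in> I" "k \<noteq> l" "j \<in> I" "j \<notin> {k, l}" "s \<in> states I" "t \<in> states I"
  shows "opmult I (emb I k l M) (site_op I j N) s t =
    (if \<forall>i\<in>I - {j, k, l}. s i = t i then M (s k) (s l) (t k) (t l) * N (s j) (t j) else 0)"
proof -
  have cond: "(\<forall>i\<in>I - {j}. (s(k := g, l := h)) i = t i) \<longleftrightarrow> g = t k \<and> h = t l \<and> (\<forall>i\<in>I - {j, k, l}. s i = t i)"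
    for g h using assms(2-6) by auto
  have "opmult I (emb I k l M) (site_op I j N) s t =
      (\<Sum>g\<in>{1,2,3}. \<Sum>h\<in>{1,2,3}. M (s k) (s l) g h * site_op I j N (s(k := g, l := h)) t)"
    unfolding opmult_def by (rule sum_emb[OF assms(1-4,7)])
  also have "\<dots> = (\<Sum>g\<in>{1,2,3}. \<Sum>h\<in>{1,2,3}. M (s k) (s l) g h *
      (if g = t k \<and> h = t l \<and> (\<forall>i\<in>I - {j, k, l}. s i = t i) then N (s j) (t j) else 0))"
    using assms(6) unfolding site_op_def cond by simp
  also have "\<dots> = (if \<forall>i\<in>I - {j, k, l}. s i = t i then M (s k) (s l) (t k) (t l) * N (s j) (t j) else 0)"
    using assms(2,3,8) by (intro sum2_mult_if_eq states_range)
  finally show ?thesis .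
qed

lemma opmult_site_op_emb:
  assumes "finite I" "k \<in> I" "l \<in> I" "j \<in> I" "j \<notin> {k, l}" "s \<in> states I" "t \<in> states I"
  shows "opmult I (site_op I j N) (emb I k l M) s t =
    (if \<forall>i\<in>I - {j, k, l}. s i = t i then N (s j) (t j) * M (s k) (s l) (t k) (t l) else 0)"
proof -
  have cond: "(\<forall>i\<in>I - {k, l}. (s(j := h)) i = t i) \<longleftrightarrow> h = t j \<and> (\<forall>i\<in>I - {j, k, l}. s i = t i)"
    for h using assms(4,5) by auto
  have "opmult I (site_op I j N) (emb I k l M) s t =
      (\<Sum>h\<in>{1,2,3}. N (s j) h * emb I k l M (s(j := h)) t)"
    unfolding opmult_def by (rule sum_site_op[OF assms(1,4,6)])
  also have "\<dots> = (\<Sum>h\<in>{1,2,3}. N (s j) h *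
      (if h = t j \<and> (\<forall>i\<in>I - {j, k, l}. s i = t i) then M (s k) (s l) (t k) (t l) else 0))"
    using assms(5) unfolding emb_def cond by simp
  also have "\<dots> = (if \<forall>i\<in>I - {j, k, l}. s i = t i then N (s j) (t j) * M (s k) (s l) (t k) (t l) else 0)"
    by (rule sum_mult_if_eq[where F = "N (s j)", OF states_range[OF assms(7,4)]])
  finally show ?thesis .
qed

lemma emb_site_op_commute:
  assumes "finite I" "k \<in> I" "l \<in> I" "k \<noteq> l" "j \<in> I" "j \<notin> {k, l}"
  shows "opeq I (opmult I (emb I k l M) (site_op I j N)) (opmult I (site_op I j N) (emb I k l M))"
  using assms by (simp add: opeq_def opmult_emb_site_op opmult_site_op_emb mult.commute)

lemma opmult_site_op_site_op:
  assumes "finite I" "j \<in> I" "k \<in> I" "j \<noteq> k" "s \<in> states I" "t \<in> states I"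
  shows "opmult I (site_op I k N) (site_op I j M) s t = emb I j k (\<lambda>p q g h. N q h * M p g) s t"
proof -
  have cond: "(\<forall>i\<in>I - {j}. (s(k := h)) i = t i) \<longleftrightarrow> h = t k \<and> (\<forall>i\<in>I - {j, k}. s i = t i)"
    for h using assms(3,4) by auto
  have "opmult I (site_op I k N) (site_op I j M) s t =
      (\<Sum>h\<in>{1,2,3}. N (s k) h * site_op I j M (s(k := h)) t)"
    unfolding opmult_def by (rule sum_site_op[OF assms(1,3,5)])
  also have "\<dots> = (\<Sum>h\<in>{1,2,3}. N (s k) h *
      (if h = t k \<and> (\<forall>i\<in>I - {j, k}. s i = t i) then M (s j) (t j) else 0))"
    using assms(4) unfolding site_op_def cond by simp
  also have "\<dots> = emb I j k (\<lambda>p q g h. N q h * M p g) s t"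
    unfolding sum_mult_if_eq[OF states_range[OF assms(6,3)]] by (simp add: emb_def)
  finally show ?thesis .
qed

lemma opmult_emb_emb:
  assumes "finite I" "j \<in> I" "k \<in> I" "j \<noteq> k"
  shows "opeq I (opmult I (emb I j k M) (emb I j k N))
    (emb I j k (\<lambda>p q g h. \<Sum>g'\<in>{1,2,3}. \<Sum>h'\<in>{1,2,3}. M p q g' h' * N g' h' g h))"
  unfolding opeq_def
proof (intro ballI)
  fix s t assume s: "s \<in> states I" and t: "t \<in> states I"
  have "(\<forall>i\<in>I - {j, k}. (s(j := g, k := h)) i = t i) \<longleftrightarrow> (\<forall>i\<in>I - {j, k}. s i = t i)" for g h
    by auto
  then have "opmult I (emb I j k M) (emb I j k N) s t = (\<Sum>g\<in>{1,2,3}. \<Sum>h\<in>{1,2,3}. M (s j) (s k) g h *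
      (if \<forall>i\<in>I - {j, k}. s i = t i then N g h (t j) (t k) else 0))"
    unfolding opmult_def sum_emb[OF assms s] using assms(4) by (simp add: emb_def)
  then show "opmult I (emb I j k M) (emb I j k N) s t =
      emb I j k (\<lambda>p q g h. \<Sum>g'\<in>{1,2,3}. \<Sum>h'\<in>{1,2,3}. M p q g' h' * N g' h' g h) s t"
    unfolding emb_def by (simp only: mult_if_zero_right sum_if_zero)
qed

lemma opmult_emb_emb_share_second:
  assumes "finite I" "j \<in> I" "k \<in> I" "l \<in> I" "j \<noteq> k" "j \<noteq> l" "k \<noteq> l" "s \<in> states I" "t \<in> states I"
  shows "opmult I (emb I j l M) (emb I k l N) s t = (if \<forall>i\<in>I - {j, k, l}. s i = t i
    then \<Sum>h\<in>{1,2,3}. M (s j) (s l) (t j) h * N (s k) h (t k) (t l) else 0)"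
proof -
  have cond: "(\<forall>i\<in>I - {k, l}. (s(j := g, l := h)) i = t i) \<longleftrightarrow> g = t j \<and> (\<forall>i\<in>I - {j, k, l}. s i = t i)"
    for g h using assms(2,5,6) by auto
  have "opmult I (emb I j l M) (emb I k l N) s t =
      (\<Sum>g\<in>{1,2,3}. \<Sum>h\<in>{1,2,3}. M (s j) (s l) g h * emb I k l N (s(j := g, l := h)) t)"
    unfolding opmult_def by (rule sum_emb[OF assms(1,2,4,6,8)])
  also have "\<dots> = (\<Sum>g\<in>{1,2,3}. \<Sum>h\<in>{1,2,3}. M (s j) (s l) g h *
      (if g = t j \<and> (\<forall>i\<in>I - {j, k, l}. s i = t i) then N (s k) h (t k) (t l) else 0))"
    using assms(5-7) unfolding emb_def cond by simp
  finally show ?thesis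
    by (simp only: sum2_mult_if_eq_outer[OF states_range[OF assms(9,2)]])
qed

lemma opmult_emb_emb_share_first:
  assumes "finite I" "j \<in> I" "k \<in> I" "l \<in> I" "j \<noteq> k" "j \<noteq> l" "k \<noteq> l" "s \<in> states I" "t \<in> states I"
  shows "opmult I (emb I j k M) (emb I j l N) s t = (if \<forall>i\<in>I - {j, k, l}. s i = t i
    then \<Sum>g\<in>{1,2,3}. M (s j) (s k) g (t k) * N g (s l) (t j) (t l) else 0)"
proof -
  have cond: "(\<forall>i\<in>I - {j, l}. (s(j := g, k := h)) i = t i) \<longleftrightarrow> h = t k \<and> (\<forall>i\<in>I - {j, k, l}. s i = t i)"
    for g h using assms(3,5,7) by auto
  have "opmult I (emb I j k M) (emb I j l N) s t =
      (\<Sum>g\<in>{1,2,3}. \<Sum>h\<in>{1,2,3}. M (s j) (s k) g h * emb I j l N (s(j := g, k := h)) t)"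
    unfolding opmult_def by (rule sum_emb[OF assms(1-3,5,8)])
  also have "\<dots> = (\<Sum>g\<in>{1,2,3}. \<Sum>h\<in>{1,2,3}. M (s j) (s k) g h *
      (if h = t k \<and> (\<forall>i\<in>I - {j, k, l}. s i = t i) then N g (s l) (t j) (t l) else 0))"
    using assms(5-7) unfolding emb_def cond by simp
  also have "\<dots> = (\<Sum>g\<in>{1,2,3}. if \<forall>i\<in>I - {j, k, l}. s i = t i then M (s j) (s k) g (t k) * N g (s l) (t j) (t l) else 0)"
    by (rule sum.cong[OF refl], rule sum_mult_if_eq[OF states_range[OF assms(9,3)]])
  finally show ?thesis by (simp only: sum_if_zero)
qed

lemma emb_cong:
  assumes "j \<in> I" "k \<in> I"
    and "\<And>p q g h. p \<in> {1,2,3} \<Longrightarrow> q \<in> {1,2,3} \<Longrightarrow> g \<in> {1,2,3} \<Longrightarrow> h \<in> {1,2,3} \<Longrightarrow>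
      M p q g h = N p q g h"
  shows "opeq I (emb I j k M) (emb I j k N)"
  using assms states_range by (auto simp: opeq_def emb_def)

lemma fun_upd_eq_comp_transpose_iff:
  assumes "s \<in> states I" "t \<in> states I" "j \<in> I" "k \<in> I"
  shows "s(Transposition.transpose j k i := h) = t \<circ> Transposition.transpose j k \<longleftrightarrow>
    h = t i \<and> (\<forall>i'\<in>I - {i}. s (Transposition.transpose j k i') = t i')"
proof -
  let ?T = "Transposition.transpose j k"
  have "s(?T i := h) = t \<circ> ?T \<longleftrightarrow> (\<forall>i'. (s(?T i := h)) (?T i') = t i')"
    unfolding fun_eq_iff comp_apply by (metis transpose_involutory)
  also have "\<dots> \<longleftrightarrow> h = t i \<and> (\<forall>i'\<in>- {i}. s (?T i') = t i')"
    by (auto simp: inj_eq[OF inj_transpose])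
  moreover have "s (?T i') = t i'" if "i' \<notin> I" for i'
  proof -
    have "?T i' = i'" using that assms(3,4) by (metis transpose_apply_other)
    then show ?thesis using that assms(1,2) by (simp add: mem_states_iff)
  qed
  ultimately show ?thesis by blast
qed

lemma Pop_site_op:
  assumes "finite I" "j \<in> I" "k \<in> I" "i \<in> I"
  shows "opeq I (opmult I (Pop j k) (site_op I i M))
    (opmult I (site_op I (Transposition.transpose j k i) M) (Pop j k))"
  unfolding opeq_def
proof (intro ballI)
  fix s t assume s: "s \<in> states I" and t: "t \<in> states I"
  let ?T = "Transposition.transpose j k"
  have Ti: "?T i \<in> I" using assms(2-4) by (auto simp: transpose_def)
  have "opmult I (Pop j k) (site_op I i M) s t = site_op I i M (s \<circ> ?T) t"
    unfolding opmult_def by (rule sum_Pop[OF assms(1-3) s])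
  also have "\<dots> = (\<Sum>h\<in>{1,2,3}. M (s (?T i)) h * (if h = t i \<and> (\<forall>i'\<in>I - {i}. s (?T i') = t i') then 1 else 0))"
    unfolding sum_mult_if_eq[OF states_range[OF t assms(4)]] by (simp add: site_op_def)
  also have "\<dots> = opmult I (site_op I (?T i) M) (Pop j k) s t"
    unfolding opmult_def sum_site_op[OF assms(1) Ti s] Pop_def
      fun_upd_eq_comp_transpose_iff[OF s t assms(2,3)] ..
  finally show "opmult I (Pop j k) (site_op I i M) s t = opmult I (site_op I (?T i) M) (Pop j k) s t" .
qed

lemma hatR_eq_emb:
  assumes "finite I" "al \<in> I" "Suc al \<in> I" "s \<in> states I"
  shows "hatR a b c I xi al pos s t =
    emb I al (Suc al) (\<lambda>p q g h. Rloc a b c (xi (pos al)) (xi (pos (Suc al))) q p g h) s t"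
  using assms unfolding hatR_def opmult_def by (simp add: sum_Pop Rop_def emb_def transpose_def)

lemma hatR_opeq_emb:
  assumes "finite I" "al \<in> I" "Suc al \<in> I"
  shows "opeq I (hatR a b c I xi al pos) (emb I al (Suc al) (\<lambda>p q g h. Rloc a b c (xi (pos al)) (xi (pos (Suc al))) q p g h))"
  using hatR_eq_emb[OF assms] by (simp add: opeq_def)

lemma hatR_site_op_commute:
  assumes "finite I" "al \<in> I" "Suc al \<in> I" "j \<in> I" "j \<notin> {al, Suc al}"
  shows "opeq I (opmult I (hatR a b c I xi al pos) (site_op I j M)) (opmult I (site_op I j M) (hatR a b c I xi al pos))"
proof -
  let ?H = "emb I al (Suc al) (\<lambda>p q g h. Rloc a b c (xi (pos al)) (xi (pos (Suc al))) q p g h)"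
  have "opeq I (opmult I (hatR a b c I xi al pos) (site_op I j M)) (opmult I ?H (site_op I j M))"
    by (intro opeq_opmult opeq_refl hatR_opeq_emb assms(1-3))
  also have "opeq I \<dots> (opmult I (site_op I j M) ?H)"
    using assms by (intro emb_site_op_commute) auto
  also have "opeq I \<dots> (opmult I (site_op I j M) (hatR a b c I xi al pos))"
    by (intro opeq_opmult opeq_refl opeq_sym[OF hatR_opeq_emb] assms(1-3))
  finally show ?thesis .
qed

section \<open>Entries of monodromy matrices\<close>

text \<open>For a chain \<open>ch = [(j_1, x_1), ..., (j_n, x_n)]\<close> of sites with spectral parameters,
  \<open>monodromy_entry a b c mu I ch k l\<close> is the operator \<open><k| R_{a j_1}(mu, x_1) ... R_{a j_n}(mu, x_n) |l>\<close>
  on the quantum sites: the auxiliary space is not a site but the pair of indices \<open>k, l\<close>.\<close>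

fun monodromy_entry ::
  "(nat \<Rightarrow> complex \<Rightarrow> complex \<Rightarrow> complex) \<Rightarrow> (nat \<Rightarrow> nat \<Rightarrow> complex \<Rightarrow> complex \<Rightarrow> complex) \<Rightarrow>
   (nat \<Rightarrow> nat \<Rightarrow> complex \<Rightarrow> complex \<Rightarrow> complex) \<Rightarrow> complex \<Rightarrow> nat set \<Rightarrow> (nat \<times> complex) list \<Rightarrow>
   nat \<Rightarrow> nat \<Rightarrow> op" where
  "monodromy_entry a b c mu I [] k l = (if k = l then opid else (\<lambda>s t. 0))"
| "monodromy_entry a b c mu I ((j, x) # ch) k l =
     opsum {1,2,3} (\<lambda>m. opmult I (site_op I j (\<lambda>p g. Rloc a b c mu x k p m g)) (monodromy_entry a b c mu I ch m l))"

lemma monodromy_entry_Cons_apply: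
  assumes "finite I" "j \<in> I" "s \<in> states I"
  shows "monodromy_entry a b c mu I ((j, x) # ch) k l s t =
    (\<Sum>m\<in>{1,2,3}. \<Sum>h\<in>{1,2,3}. Rloc a b c mu x k (s j) m h * monodromy_entry a b c mu I ch m l (s(j := h)) t)"
  using assms by (simp add: opsum_def opmult_def sum_site_op)

text \<open>The sites \<open>n, ..., 1\<close> in this order, site \<open>i\<close> carrying the spectral parameter of the
  factor \<open>q i\<close> (as in \<open>hatR\<close>, whose argument \<open>pos\<close> records which factor sits where).\<close>

definition site_chain :: "(nat \<Rightarrow> complex) \<Rightarrow> (nat \<Rightarrow> nat) \<Rightarrow> nat \<Rightarrow> (nat \<times> complex) list" where
  "site_chain xi q n = map (\<lambda>i. (i, xi (q i))) (rev [1..<Suc n])"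

lemma site_chain_Suc: "site_chain xi q (Suc n) = (Suc n, xi (q (Suc n))) # site_chain xi q n"
  by (simp add: site_chain_def)

lemma monodromy_eq_monodromy_entry:
  assumes "n \<le> L" "k \<in> {1,2,3}" "l \<in> {1,2,3}" "s \<in> states {1..L}" "t \<in> states {1..L}"
  shows "monodromy a b c L xi mu n (s(0 := k)) (t(0 := l)) =
    monodromy_entry a b c mu {1..L} (site_chain xi id n) k l s t"
  using assms
proof (induction n arbitrary: k s)
  case 0
  have "s(0 := k) = t(0 := l) \<longleftrightarrow> k = l \<and> s = t"
    using 0 by (auto simp: fun_eq_iff mem_states_iff)
  then have "opid (s(0 := k)) (t(0 := l)) = (if k = l then opid s t else 0)"
    by (simp only: opid_def) auto
  moreover have "monodromy_entry a b c mu {1..L} (site_chain xi id 0) k l s t = (if k = l then opid s t else 0)"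
    by (simp add: site_chain_def)
  ultimately show ?case by (simp only: monodromy.simps(1))
next
  case (Suc n)
  have s0: "s(0 := k) \<in> states {0..L}" using Suc.prems by (auto simp: mem_states_iff)
  have "monodromy a b c L xi mu (Suc n) (s(0 := k)) (t(0 := l)) =
      (\<Sum>m\<in>{1,2,3}. \<Sum>h\<in>{1,2,3}. Rloc a b c mu (xi (Suc n)) k (s (Suc n)) m h *
         monodromy a b c L xi mu n ((s(Suc n := h))(0 := m)) (t(0 := l)))"
    using Suc.prems s0 by (simp add: opmult_def Rop_def sum_emb fun_upd_twist)
  also have "\<dots> = (\<Sum>m\<in>{1,2,3}. \<Sum>h\<in>{1,2,3}. Rloc a b c mu (xi (Suc n)) k (s (Suc n)) m h *
         monodromy_entry a b c mu {1..L} (site_chain xi id n) m l (s(Suc n := h)) t)"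
    using Suc by (intro sum.cong refl, subst Suc.IH) (auto intro: fun_upd_in_states)
  also have "\<dots> = monodromy_entry a b c mu {1..L} (site_chain xi id (Suc n)) k l s t"
    using Suc.prems
    by (simp add: site_chain_Suc opsum_def opmult_def sum_site_op sum_distrib_left mult.assoc)
  finally show ?case .
qed

lemma Dop_opeq_monodromy_entry:
  "opeq {1..L} (Dop a b c L xi mu) (monodromy_entry a b c mu {1..L} (site_chain xi id L) 3 3)"
  unfolding opeq_def Dop_def by (simp add: monodromy_eq_monodromy_entry)

lemma monodromy_entry_append:
  assumes "finite I" "k \<in> {1,2,3}"
  shows "opeq I (monodromy_entry a b c mu I (ch @ ch') k l)
    (opsum {1,2,3} (\<lambda>m. opmult I (monodromy_entry a b c mu I ch k m) (monodromy_entry a b c mu I ch' m l)))"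
  using assms(2)
proof (induction ch arbitrary: k)
  case Nil
  have "opsum {1,2,3} (\<lambda>m. opmult I (monodromy_entry a b c mu I [] k m) (monodromy_entry a b c mu I ch' m l)) =
      opmult I opid (monodromy_entry a b c mu I ch' k l)"
    using Nil by (simp add: opsum_delta_left)
  then show ?case
    using opmult_opid_left[OF assms(1)] by (simp add: opeq_sym)
next
  case (Cons jx ch)
  obtain j x where jx: "jx = (j, x)" by fastforce
  have "opeq I (monodromy_entry a b c mu I (jx # ch @ ch') k l)
      (opsum {1,2,3} (\<lambda>m. opmult I (site_op I j (\<lambda>p g. Rloc a b c mu x k p m g))
        (opsum {1,2,3} (\<lambda>n. opmult I (monodromy_entry a b c mu I ch m n) (monodromy_entry a b c mu I ch' n l)))))"
    unfolding jx monodromy_entry.simps by (intro opeq_opsum opeq_opmult opeq_refl Cons.IH) auto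
  also have "\<dots> = opsum {1,2,3} (\<lambda>n. opmult I (monodromy_entry a b c mu I (jx # ch) k n) (monodromy_entry a b c mu I ch' n l))"
    unfolding jx monodromy_entry.simps opmult_opsum_right opmult_opsum_left opmult_assoc
    by (rule opsum_swap)
  finally show ?case by simp
qed

lemma monodromy_entry_intertwine:
  assumes "finite I"
    and "\<And>j x M. (j, x) \<in> set ch \<Longrightarrow> opeq I (opmult I A (site_op I j M)) (opmult I (site_op I (h j) M) A)"
  shows "opeq I (opmult I A (monodromy_entry a b c mu I ch k l))
    (opmult I (monodromy_entry a b c mu I (map (\<lambda>(j, x). (h j, x)) ch) k l) A)"
  using assms(2)
proof (induction ch arbitrary: k)
  case Nil
  show ?case
  proof (cases "k = l")
    case True
    then show ?thesis
      using opmult_opid_left[OF assms(1)] opmult_opid_right[OF assms(1)]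
      by simp (meson opeq_sym opeq_trans)
  qed (simp add: opmult_def)
next
  case (Cons jx ch)
  obtain j x where jx: "jx = (j, x)" by fastforce
  have "opmult I A (monodromy_entry a b c mu I (jx # ch) k l) =
      opsum {1,2,3} (\<lambda>m. opmult I (opmult I A (site_op I j (\<lambda>p g. Rloc a b c mu x k p m g)))
        (monodromy_entry a b c mu I ch m l))"
    unfolding jx monodromy_entry.simps opmult_opsum_right opmult_assoc ..
  also have "opeq I \<dots> (opsum {1,2,3} (\<lambda>m. opmult I (site_op I (h j) (\<lambda>p g. Rloc a b c mu x k p m g))
        (opmult I A (monodromy_entry a b c mu I ch m l))))"
    unfolding opmult_assoc[symmetric]
    by (rule opeq_opsum, rule opeq_opmult[OF Cons.prems[of j x] opeq_refl]) (simp add: jx)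
  also have "opeq I \<dots> (opsum {1,2,3} (\<lambda>m. opmult I (site_op I (h j) (\<lambda>p g. Rloc a b c mu x k p m g))
        (opmult I (monodromy_entry a b c mu I (map (\<lambda>(j, x). (h j, x)) ch) m l) A)))"
    by (intro opeq_opsum opeq_opmult opeq_refl Cons.IH Cons.prems) auto
  also have "\<dots> = opmult I (monodromy_entry a b c mu I (map (\<lambda>(j, x). (h j, x)) (jx # ch)) k l) A"
    by (simp add: jx opmult_opsum_left opmult_assoc)
  finally show ?case .
qed

lemma monodromy_entry_commute:
  assumes "finite I"
    and "\<And>j x M. (j, x) \<in> set ch \<Longrightarrow> opeq I (opmult I A (site_op I j M)) (opmult I (site_op I j M) A)"
  shows "opeq I (opmult I A (monodromy_entry a b c mu I ch k l)) (opmult I (monodromy_entry a b c mu I ch k l) A)"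
proof -
  have "opeq I (opmult I A (monodromy_entry a b c mu I ch k l))
      (opmult I (monodromy_entry a b c mu I (map (\<lambda>(j, x). (id j, x)) ch) k l) A)"
    by (rule monodromy_entry_intertwine[OF assms(1)]) (simp add: assms(2))
  moreover have "map (\<lambda>(j, x). (id j, x)) ch = ch"
    by (induction ch) auto
  ultimately show ?thesis by simp
qed

lemma monodromy_entry_intertwine_append:
  assumes "finite I" "k \<in> {1,2,3}"
    and "\<And>n. n \<in> {1,2,3} \<Longrightarrow>
      opeq I (opmult I A (monodromy_entry a b c mu I ch k n)) (opmult I (monodromy_entry a b c mu I ch' k n) A)"
    and "\<And>n. n \<in> {1,2,3} \<Longrightarrow>
      opeq I (opmult I A (monodromy_entry a b c mu I dh n l)) (opmult I (monodromy_entry a b c mu I dh' n l) A)"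
  shows "opeq I (opmult I A (monodromy_entry a b c mu I (ch @ dh) k l))
    (opmult I (monodromy_entry a b c mu I (ch' @ dh') k l) A)"
proof -
  let ?E = "monodromy_entry a b c mu I"
  have "opeq I (opmult I A (?E (ch @ dh) k l)) (opmult I A (opsum {1,2,3} (\<lambda>n. opmult I (?E ch k n) (?E dh n l))))"
    by (intro opeq_opmult opeq_refl monodromy_entry_append assms(1,2))
  also have "\<dots> = opsum {1,2,3} (\<lambda>n. opmult I (opmult I A (?E ch k n)) (?E dh n l))"
    by (simp add: opmult_opsum_right opmult_assoc)
  also have "opeq I \<dots> (opsum {1,2,3} (\<lambda>n. opmult I (?E ch' k n) (opmult I A (?E dh n l))))"
    unfolding opmult_assoc[symmetric] by (intro opeq_opsum opeq_opmult opeq_refl assms(3))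
  also have "opeq I \<dots> (opsum {1,2,3} (\<lambda>n. opmult I (?E ch' k n) (opmult I (?E dh' n l) A)))"
    by (intro opeq_opsum opeq_opmult opeq_refl assms(4))
  also have "\<dots> = opmult I (opsum {1,2,3} (\<lambda>n. opmult I (?E ch' k n) (?E dh' n l))) A"
    by (simp add: opmult_opsum_left opmult_assoc)
  also have "opeq I \<dots> (opmult I (?E (ch' @ dh') k l) A)"
    by (intro opeq_opmult opeq_refl opeq_sym[OF monodromy_entry_append] assms(1,2))
  finally show ?thesis .
qed

lemma monodromy_entry_pair:
  assumes "finite I" "j \<in> I" "k \<in> I" "j \<noteq> k" "l \<in> {1,2,3}"
  shows "opeq I (monodromy_entry a b c mu I [(k, y), (j, x)] m l)
    (emb I j k (\<lambda>p q g h. \<Sum>n\<in>{1,2,3}. Rloc a b c mu y m q n h * Rloc a b c mu x n p l g))"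
  unfolding opeq_def
proof (intro ballI)
  fix s t assume s: "s \<in> states I" and t: "t \<in> states I"
  have "opeq I (monodromy_entry a b c mu I [(j, x)] n l) (site_op I j (\<lambda>p g. Rloc a b c mu x n p l g))" for n
  proof -
    have "monodromy_entry a b c mu I [(j, x)] n l = opmult I (site_op I j (\<lambda>p g. Rloc a b c mu x n p l g)) opid"
      by (simp only: monodromy_entry.simps) (rule opsum_delta_right, use assms(5) in auto)
    then show ?thesis using opmult_opid_right[OF assms(1)] by simp
  qed
  then have "opeq I (monodromy_entry a b c mu I [(k, y), (j, x)] m l)
      (opsum {1,2,3} (\<lambda>n. opmult I (site_op I k (\<lambda>q h. Rloc a b c mu y m q n h))
        (site_op I j (\<lambda>p g. Rloc a b c mu x n p l g))))"
    unfolding monodromy_entry.simps(2)[of _ _ _ _ _ k y] by (intro opeq_opsum opeq_opmult opeq_refl)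
  then have "monodromy_entry a b c mu I [(k, y), (j, x)] m l s t =
      (\<Sum>n\<in>{1,2,3}. emb I j k (\<lambda>p q g h. Rloc a b c mu y m q n h * Rloc a b c mu x n p l g) s t)"
    using assms s t by (simp add: opeq_def opsum_def opmult_site_op_site_op)
  then show "monodromy_entry a b c mu I [(k, y), (j, x)] m l s t =
      emb I j k (\<lambda>p q g h. \<Sum>n\<in>{1,2,3}. Rloc a b c mu y m q n h * Rloc a b c mu x n p l g) s t"
    unfolding emb_def sum_if_zero .
qed

section \<open>The RLL relation\<close>

lemma Rloc_YBE:
  assumes "YBE a b c"
    and "s1 \<in> {1,2,3}" "s2 \<in> {1,2,3}" "s3 \<in> {1,2,3}" "t1 \<in> {1,2,3}" "t2 \<in> {1,2,3}" "t3 \<in> {1,2,3}"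
  shows "(\<Sum>g1\<in>{1,2,3}. \<Sum>g2\<in>{1,2,3}. Rloc a b c x1 x2 s1 s2 g1 g2 *
            (\<Sum>h3\<in>{1,2,3}. Rloc a b c x1 x3 g1 s3 t1 h3 * Rloc a b c x2 x3 g2 h3 t2 t3)) =
         (\<Sum>g2\<in>{1,2,3}. \<Sum>g3\<in>{1,2,3}. Rloc a b c x2 x3 s2 s3 g2 g3 *
            (\<Sum>h1\<in>{1,2,3}. Rloc a b c x1 x3 s1 g3 h1 t3 * Rloc a b c x1 x2 h1 g2 t1 t2))"
proof -
  let ?I = "{1,2,3::nat}"
  let ?R = "\<lambda>j k x y. Rop a b c ?I j k x y"
  define s :: state where "s = (\<lambda>_. undefined)(1 := s1, 2 := s2, 3 := s3)"
  define t :: state where "t = (\<lambda>_. undefined)(1 := t1, 2 := t2, 3 := t3)"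
  have st: "s \<in> states ?I" "t \<in> states ?I"
    using assms(2-7) by (auto simp: s_def t_def mem_states_iff)
  have val: "s 1 = s1" "s 2 = s2" "s 3 = s3" "t 1 = t1" "t 2 = t2" "t 3 = t3" "s (Suc 0) = s1" "t (Suc 0) = t1"
    by (simp_all add: s_def t_def)
  have inner1: "opmult ?I (?R 1 3 x1 x3) (?R 2 3 x2 x3) (s(1 := g1, 2 := g2)) t =
      (\<Sum>h\<in>{1,2,3}. Rloc a b c x1 x3 g1 s3 t1 h * Rloc a b c x2 x3 g2 h t2 t3)"
    if "g1 \<in> ?I" "g2 \<in> ?I" for g1 g2
    using opmult_emb_emb_share_second[of ?I 1 2 3 "s(1 := g1, 2 := g2)" t] that st
    by (simp add: Rop_def val fun_upd_in_states)
  have inner2: "opmult ?I (?R 1 3 x1 x3) (?R 1 2 x1 x2) (s(2 := g2, 3 := g3)) t =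
      (\<Sum>h\<in>{1,2,3}. Rloc a b c x1 x3 s1 g3 h t3 * Rloc a b c x1 x2 h g2 t1 t2)"
    if "g2 \<in> ?I" "g3 \<in> ?I" for g2 g3
    using opmult_emb_emb_share_first[of ?I 1 3 2 "s(2 := g2, 3 := g3)" t] that st
    by (simp add: Rop_def val fun_upd_in_states)
  have "(\<Sum>g1\<in>{1,2,3}. \<Sum>g2\<in>{1,2,3}. Rloc a b c x1 x2 s1 s2 g1 g2 *
        (\<Sum>h3\<in>{1,2,3}. Rloc a b c x1 x3 g1 s3 t1 h3 * Rloc a b c x2 x3 g2 h3 t2 t3)) =
      (\<Sum>g1\<in>{1,2,3}. \<Sum>g2\<in>{1,2,3}. Rloc a b c x1 x2 (s 1) (s 2) g1 g2 *
        opmult ?I (?R 1 3 x1 x3) (?R 2 3 x2 x3) (s(1 := g1, 2 := g2)) t)"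
    by (rule sum.cong[OF refl], rule sum.cong[OF refl]) (simp only: inner1 val)
  also have "\<dots> = opmult ?I (?R 1 2 x1 x2) (opmult ?I (?R 1 3 x1 x3) (?R 2 3 x2 x3)) s t"
    unfolding Rop_def[of _ _ _ _ 1 2] opmult_def[of ?I "emb ?I 1 2 _"]
    by (rule sum_emb[OF _ _ _ _ st(1), symmetric]) simp_all
  also have "\<dots> = opmult ?I (?R 2 3 x2 x3) (opmult ?I (?R 1 3 x1 x3) (?R 1 2 x1 x2)) s t"
    using assms(1) st unfolding YBE_def opeq_def opmult_assoc by blast
  also have "\<dots> = (\<Sum>g2\<in>{1,2,3}. \<Sum>g3\<in>{1,2,3}. Rloc a b c x2 x3 (s 2) (s 3) g2 g3 *
        opmult ?I (?R 1 3 x1 x3) (?R 1 2 x1 x2) (s(2 := g2, 3 := g3)) t)"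
    unfolding Rop_def[of _ _ _ _ 2 3] opmult_def[of ?I "emb ?I 2 3 _"] by (rule sum_emb[OF _ _ _ _ st(1)]) simp_all
  also have "\<dots> = (\<Sum>g2\<in>{1,2,3}. \<Sum>g3\<in>{1,2,3}. Rloc a b c x2 x3 s2 s3 g2 g3 *
        (\<Sum>h1\<in>{1,2,3}. Rloc a b c x1 x3 s1 g3 h1 t3 * Rloc a b c x1 x2 h1 g2 t1 t2))"
    by (rule sum.cong[OF refl], rule sum.cong[OF refl]) (simp only: inner2 val)
  finally show ?thesis .
qed

text \<open>The two-site operator below is \<open>P_{jk} R_{jk}(x, y)\<close>, so this is the RLL relation
  \<open>P_{jk} R_{jk}(x, y) R_{ak}(mu, y) R_{aj}(mu, x) = R_{ak}(mu, x) R_{aj}(mu, y) P_{jk} R_{jk}(x, y)\<close>,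
  i.e. the Yang--Baxter equation on \<open>(a, j, k)\<close> multiplied by \<open>P_{jk}\<close>.\<close>

lemma RLL_relation:
  assumes "YBE a b c" "finite I" "j \<in> I" "k \<in> I" "j \<noteq> k" "m \<in> {1,2,3}" "l \<in> {1,2,3}"
  shows "opeq I (opmult I (emb I j k (\<lambda>p q g h. Rloc a b c x y q p g h)) (monodromy_entry a b c mu I [(k, y), (j, x)] m l))
    (opmult I (monodromy_entry a b c mu I [(k, x), (j, y)] m l) (emb I j k (\<lambda>p q g h. Rloc a b c x y q p g h)))"
proof -
  let ?P = "\<lambda>p q g h. Rloc a b c x y q p g h"
  let ?T = "\<lambda>x y p q g h. \<Sum>n\<in>{1,2,3}. Rloc a b c mu y m q n h * Rloc a b c mu x n p l g"
  have "opeq I (opmult I (emb I j k ?P) (monodromy_entry a b c mu I [(k, y), (j, x)] m l))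
      (opmult I (emb I j k ?P) (emb I j k (?T x y)))"
    using assms(2-5,7) by (intro opeq_opmult opeq_refl monodromy_entry_pair)
  also have "opeq I \<dots> (emb I j k (\<lambda>p q g h. \<Sum>g'\<in>{1,2,3}. \<Sum>h'\<in>{1,2,3}. ?P p q g' h' * ?T x y g' h' g h))"
    using assms(2-5) by (rule opmult_emb_emb)
  also have "opeq I \<dots> (emb I j k (\<lambda>p q g h. \<Sum>g'\<in>{1,2,3}. \<Sum>h'\<in>{1,2,3}. ?T y x p q g' h' * ?P g' h' g h))"
  proof (rule emb_cong[OF assms(3,4)])
    fix p q g h :: nat assume "p \<in> {1,2,3}" "q \<in> {1,2,3}" "g \<in> {1,2,3}" "h \<in> {1,2,3}"
    from Rloc_YBE[OF assms(1,6) this(2,1) assms(7) this(3,4), of mu x y]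
    show "(\<Sum>g'\<in>{1,2,3}. \<Sum>h'\<in>{1,2,3}. ?P p q g' h' * ?T x y g' h' g h) =
        (\<Sum>g'\<in>{1,2,3}. \<Sum>h'\<in>{1,2,3}. ?T y x p q g' h' * ?P g' h' g h)"
      by (simp only: sum3_rearrange)
  qed
  also have "opeq I \<dots> (opmult I (emb I j k (?T y x)) (emb I j k ?P))"
    using assms(2-5) by (rule opeq_sym[OF opmult_emb_emb])
  also have "opeq I \<dots> (opmult I (monodromy_entry a b c mu I [(k, x), (j, y)] m l) (emb I j k ?P))"
    using assms(2-5,7) by (intro opeq_opmult opeq_refl opeq_sym[OF monodromy_entry_pair])
  finally show ?thesis .
qed

lemma hatR_RLL:
  assumes "YBE a b c" "finite I" "al \<in> I" "Suc al \<in> I" "m \<in> {1,2,3}" "n \<in> {1,2,3}"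
  shows "opeq I (opmult I (hatR a b c I xi al q) (monodromy_entry a b c mu I [(Suc al, xi (q (Suc al))), (al, xi (q al))] m n))
    (opmult I (monodromy_entry a b c mu I [(Suc al, xi (q al)), (al, xi (q (Suc al)))] m n) (hatR a b c I xi al q))"
proof -
  let ?P = "emb I al (Suc al) (\<lambda>p q' g h. Rloc a b c (xi (q al)) (xi (q (Suc al))) q' p g h)"
  let ?E = "monodromy_entry a b c mu I"
  have "opeq I (opmult I (hatR a b c I xi al q) (?E [(Suc al, xi (q (Suc al))), (al, xi (q al))] m n))
      (opmult I ?P (?E [(Suc al, xi (q (Suc al))), (al, xi (q al))] m n))"
    by (intro opeq_opmult opeq_refl hatR_opeq_emb assms(2-4))
  also have "opeq I \<dots> (opmult I (?E [(Suc al, xi (q al)), (al, xi (q (Suc al)))] m n) ?P)"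
    using assms by (intro RLL_relation) auto
  also have "opeq I \<dots> (opmult I (?E [(Suc al, xi (q al)), (al, xi (q (Suc al)))] m n) (hatR a b c I xi al q))"
    by (intro opeq_opmult opeq_refl opeq_sym[OF hatR_opeq_emb] assms(2-4))
  finally show ?thesis .
qed

section \<open>Intertwining D with the operators R^sigma\<close>

lemma site_chain_split:
  assumes "1 \<le> al" "al < L"
  shows "site_chain xi q L = map (\<lambda>i. (i, xi (q i))) (rev [Suc (Suc al)..<Suc L]) @
    [(Suc al, xi (q (Suc al))), (al, xi (q al))] @ map (\<lambda>i. (i, xi (q i))) (rev [1..<al])"
proof -
  have "[1..<Suc L] = [1..<al] @ [al..<Suc L]"
    using assms upt_add_eq_append[of 1 al "Suc L - al"] by simp
  also have "[al..<Suc L] = al # Suc al # [Suc (Suc al)..<Suc L]"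
    using assms by (simp add: upt_conv_Cons)
  finally show ?thesis by (simp add: site_chain_def)
qed

lemma hatR_site_chain:
  assumes "YBE a b c" "1 \<le> al" "al < L" "k \<in> {1,2,3}" "l \<in> {1,2,3}"
  shows "opeq {1..L} (opmult {1..L} (hatR a b c {1..L} xi al q) (monodromy_entry a b c mu {1..L} (site_chain xi q L) k l))
    (opmult {1..L} (monodromy_entry a b c mu {1..L} (site_chain xi (q \<circ> Transposition.transpose al (Suc al)) L) k l)
      (hatR a b c {1..L} xi al q))"
proof -
  let ?I = "{1..L}"
  let ?H = "hatR a b c ?I xi al q"
  let ?E = "monodromy_entry a b c mu ?I"
  let ?T = "Transposition.transpose al (Suc al)"
  define pre where "pre = map (\<lambda>i. (i, xi (q i))) (rev [Suc (Suc al)..<Suc L])"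
  define post where "post = map (\<lambda>i. (i, xi (q i))) (rev [1..<al])"
  have I: "finite ?I" "al \<in> ?I" "Suc al \<in> ?I" using assms(2,3) by auto
  have chain: "site_chain xi q L = pre @ [(Suc al, xi (q (Suc al))), (al, xi (q al))] @ post"
    unfolding pre_def post_def using assms(2,3) by (rule site_chain_split)
  have chain_swapped: "site_chain xi (q \<circ> ?T) L = pre @ [(Suc al, xi (q al)), (al, xi (q (Suc al)))] @ post"
  proof -
    have "map (\<lambda>i. (i, xi ((q \<circ> ?T) i))) (rev [Suc (Suc al)..<Suc L]) = pre"
      unfolding pre_def by auto
    moreover have "map (\<lambda>i. (i, xi ((q \<circ> ?T) i))) (rev [1..<al]) = post"
      unfolding post_def by auto
    ultimately show ?thesis
      using site_chain_split[OF assms(2,3), of xi "q \<circ> ?T"] by simp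
  qed
  have commute: "opeq ?I (opmult ?I ?H (?E ch m n)) (opmult ?I (?E ch m n) ?H)" if "ch = pre \<or> ch = post" for ch m n
    using that assms(2,3) by (intro monodromy_entry_commute hatR_site_op_commute I) (auto simp: pre_def post_def)
  show ?thesis
    unfolding chain chain_swapped
  proof (rule monodromy_entry_intertwine_append[OF I(1) assms(4)])
    fix n :: nat assume n: "n \<in> {1,2,3}"
    show "opeq ?I (opmult ?I ?H (?E pre k n)) (opmult ?I (?E pre k n) ?H)"
      by (rule commute[OF disjI1[OF refl]])
    show "opeq ?I (opmult ?I ?H (?E ([(Suc al, xi (q (Suc al))), (al, xi (q al))] @ post) n l))
        (opmult ?I (?E ([(Suc al, xi (q al)), (al, xi (q (Suc al)))] @ post) n l) ?H)"
      by (rule monodromy_entry_intertwine_append[OF I(1) n hatR_RLL[OF assms(1) I n] commute[OF disjI2[OF refl]]])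
  qed
qed

lemma fold_word_perm:
  "fold (\<lambda>al f. Transposition.transpose al (Suc al) \<circ> f) w (g :: nat \<Rightarrow> nat) = word_perm w \<circ> g"
proof (induction w arbitrary: g)
  case (Cons al w)
  let ?f = "\<lambda>al f. Transposition.transpose al (Suc al) \<circ> f"
  have "fold ?f (al # w) g = fold ?f w (Transposition.transpose al (Suc al) \<circ> g)"
    by (simp only: fold_Cons comp_apply)
  also have "\<dots> = word_perm w \<circ> (Transposition.transpose al (Suc al) \<circ> g)"
    by (rule Cons.IH)
  finally have fold_Cons_eq: "fold ?f (al # w) g = word_perm w \<circ> (Transposition.transpose al (Suc al) \<circ> g)" .
  have "word_perm (al # w) = fold ?f w (Transposition.transpose al (Suc al) \<circ> id)"
    unfolding word_perm_def by (simp only: fold_Cons comp_apply)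
  also have "\<dots> = word_perm w \<circ> (Transposition.transpose al (Suc al) \<circ> id)"
    by (rule Cons.IH)
  finally show ?case
    unfolding fold_Cons_eq by (simp add: comp_assoc)
qed (simp add: word_perm_def)

lemma word_perm_Nil [simp]: "word_perm [] = id"
  by (simp add: word_perm_def)

lemma word_perm_append: "word_perm (w @ v) = word_perm v \<circ> word_perm w"
  by (simp add: word_perm_def[of "w @ v"] fold_word_perm flip: word_perm_def)

lemma word_perm_Cons: "word_perm (al # w) = word_perm w \<circ> Transposition.transpose al (Suc al)"
  using word_perm_append[of "[al]" w] by (simp add: word_perm_def)

lemma word_perm_snoc: "word_perm (w @ [al]) = Transposition.transpose al (Suc al) \<circ> word_perm w"
  using word_perm_append[of w "[al]"] by (simp add: word_perm_def)

lemma hatprod_site_chain: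
  assumes "YBE a b c" "set w \<subseteq> {1..<L}" "k \<in> {1,2,3}" "l \<in> {1,2,3}"
  shows "opeq {1..L} (opmult {1..L} (hatprod a b c {1..L} xi w q) (monodromy_entry a b c mu {1..L} (site_chain xi q L) k l))
    (opmult {1..L} (monodromy_entry a b c mu {1..L} (site_chain xi (q \<circ> word_perm (rev w)) L) k l)
      (hatprod a b c {1..L} xi w q))"
  using assms(2)
proof (induction w arbitrary: q)
  case Nil
  show ?case
    using opmult_opid_left[of "{1..L}"] opmult_opid_right[of "{1..L}"]
    by simp (meson opeq_sym opeq_trans)
next
  case (Cons al w)
  let ?I = "{1..L}"
  let ?E = "monodromy_entry a b c mu ?I"
  let ?q' = "q \<circ> Transposition.transpose al (Suc al)"
  let ?P = "hatprod a b c ?I xi w ?q'"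
  let ?H = "hatR a b c ?I xi al q"
  have "opmult ?I (hatprod a b c ?I xi (al # w) q) (?E (site_chain xi q L) k l) =
      opmult ?I ?P (opmult ?I ?H (?E (site_chain xi q L) k l))"
    by (simp add: opmult_assoc)
  also have "opeq ?I \<dots> (opmult ?I ?P (opmult ?I (?E (site_chain xi ?q' L) k l) ?H))"
    using Cons.prems by (intro opeq_opmult opeq_refl hatR_site_chain assms(1,3,4)) auto
  also have "\<dots> = opmult ?I (opmult ?I ?P (?E (site_chain xi ?q' L) k l)) ?H"
    by (simp add: opmult_assoc)
  also have "opeq ?I \<dots> (opmult ?I (opmult ?I (?E (site_chain xi (?q' \<circ> word_perm (rev w)) L) k l) ?P) ?H)"
    using Cons by (intro opeq_opmult opeq_refl Cons.IH) auto
  also have "\<dots> = opmult ?I (?E (site_chain xi (q \<circ> word_perm (rev (al # w))) L) k l) (hatprod a b c ?I xi (al # w) q)"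
    by (simp add: opmult_assoc word_perm_snoc comp_assoc)
  finally show ?case .
qed

lemma pprod_monodromy_entry:
  assumes "set w \<subseteq> {1..<L}" "fst ` set ch \<subseteq> {1..L}"
  shows "opeq {1..L} (opmult {1..L} (pprod {1..L} w) (monodromy_entry a b c mu {1..L} ch k l))
    (opmult {1..L} (monodromy_entry a b c mu {1..L} (map (\<lambda>(j, x). (word_perm w j, x)) ch) k l) (pprod {1..L} w))"
  using assms
proof (induction w arbitrary: ch)
  case Nil
  have "map (\<lambda>(j, x). (j, x)) ch = ch" by simp
  then show ?case
    using opmult_opid_left[of "{1..L}"] opmult_opid_right[of "{1..L}"]
    by simp (meson opeq_sym opeq_trans)
next
  case (Cons al w)
  let ?I = "{1..L}"
  let ?E = "monodromy_entry a b c mu ?I"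
  let ?T = "Transposition.transpose al (Suc al)"
  let ?ch' = "map (\<lambda>(j, x). (?T j, x)) ch"
  have al: "al \<in> ?I" "Suc al \<in> ?I" using Cons.prems by auto
  have "opmult ?I (pprod ?I (al # w)) (?E ch k l) = opmult ?I (pprod ?I w) (opmult ?I (Pop al (Suc al)) (?E ch k l))"
    by (simp add: opmult_assoc)
  also have "opeq ?I \<dots> (opmult ?I (pprod ?I w) (opmult ?I (?E ?ch' k l) (Pop al (Suc al))))"
    using Cons.prems al
    by (intro opeq_opmult opeq_refl monodromy_entry_intertwine Pop_site_op) (auto simp: image_iff)
  also have "\<dots> = opmult ?I (opmult ?I (pprod ?I w) (?E ?ch' k l)) (Pop al (Suc al))"
    by (simp add: opmult_assoc)
  also have "opeq ?I \<dots> (opmult ?I (opmult ?I (?E (map (\<lambda>(j, x). (word_perm w j, x)) ?ch') k l) (pprod ?I w)) (Pop al (Suc al)))"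
    using Cons.prems al by (intro opeq_opmult opeq_refl Cons.IH) (auto simp: transpose_def)
  also have "map (\<lambda>(j, x). (word_perm w j, x)) ?ch' = map (\<lambda>(j, x). (word_perm (al # w) j, x)) ch"
    by (auto simp: word_perm_Cons)
  also have "opmult ?I (opmult ?I (?E (map (\<lambda>(j, x). (word_perm (al # w) j, x)) ch) k l) (pprod ?I w)) (Pop al (Suc al)) =
      opmult ?I (?E (map (\<lambda>(j, x). (word_perm (al # w) j, x)) ch) k l) (pprod ?I (al # w))"
    by (simp add: opmult_assoc)
  finally show ?case .
qed

definition twisted_chain :: "(nat \<Rightarrow> complex) \<Rightarrow> (nat \<Rightarrow> nat) \<Rightarrow> nat \<Rightarrow> (nat \<times> complex) list" where
  "twisted_chain xi \<sigma> L = map (\<lambda>i. (\<sigma> i, xi (\<sigma> i))) (rev [1..<Suc L])"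

lemma Rword_monodromy_entry:
  assumes "YBE a b c" "set w \<subseteq> {1..<L}" "k \<in> {1,2,3}" "l \<in> {1,2,3}"
  shows "opeq {1..L} (opmult {1..L} (Rword a b c {1..L} xi w) (monodromy_entry a b c mu {1..L} (site_chain xi id L) k l))
    (opmult {1..L} (monodromy_entry a b c mu {1..L} (twisted_chain xi (word_perm w) L) k l)
      (Rword a b c {1..L} xi w))"
proof -
  let ?I = "{1..L}"
  let ?E = "monodromy_entry a b c mu ?I"
  let ?\<sigma> = "word_perm w"
  let ?Q = "hatprod a b c ?I xi (rev w) id"
  have "opmult ?I (Rword a b c ?I xi w) (?E (site_chain xi id L) k l) = opmult ?I (pprod ?I w) (opmult ?I ?Q (?E (site_chain xi id L) k l))"
    by (simp add: Rword_def opmult_assoc)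
  also have "opeq ?I \<dots> (opmult ?I (pprod ?I w) (opmult ?I (?E (site_chain xi ?\<sigma> L) k l) ?Q))"
    using hatprod_site_chain[OF assms(1) _ assms(3,4), of "rev w" L xi id] assms(2)
    by (intro opeq_opmult[OF opeq_refl]) simp
  also have "\<dots> = opmult ?I (opmult ?I (pprod ?I w) (?E (site_chain xi ?\<sigma> L) k l)) ?Q"
    by (simp add: opmult_assoc)
  also have "opeq ?I \<dots> (opmult ?I (opmult ?I (?E (map (\<lambda>(j, x). (?\<sigma> j, x)) (site_chain xi ?\<sigma> L)) k l) (pprod ?I w)) ?Q)"
    using assms(2) by (intro opeq_opmult opeq_refl pprod_monodromy_entry) (auto simp: site_chain_def)
  also have "map (\<lambda>(j, x). (?\<sigma> j, x)) (site_chain xi ?\<sigma> L) = twisted_chain xi ?\<sigma> L"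
    by (simp add: site_chain_def twisted_chain_def)
  also have "opmult ?I (opmult ?I (?E (twisted_chain xi ?\<sigma> L) k l) (pprod ?I w)) ?Q =
      opmult ?I (?E (twisted_chain xi ?\<sigma> L) k l) (Rword a b c ?I xi w)"
    by (simp add: Rword_def opmult_assoc)
  finally show ?thesis .
qed

lemma transpose_word_exists:
  assumes "1 \<le> i" "i < j" "j \<le> L"
  shows "\<exists>w. set w \<subseteq> {1..<L} \<and> word_perm w = Transposition.transpose i j"
  using assms
proof (induction j)
  case (Suc j)
  show ?case
  proof (cases "i = j")
    case True
    then show ?thesis
      using Suc.prems by (intro exI[of _ "[i]"]) (auto simp: word_perm_def)
  next
    case False
    then obtain w where w: "set w \<subseteq> {1..<L}" "word_perm w = Transposition.transpose i j"
      using Suc by auto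
    have "word_perm ([j] @ w @ [j]) = Transposition.transpose i (Suc j)"
      using False Suc.prems
      by (simp add: word_perm_append word_perm_Cons w(2) fun_eq_iff transpose_def)
    moreover have "set ([j] @ w @ [j]) \<subseteq> {1..<L}"
      using w(1) Suc.prems False by auto
    ultimately show ?thesis by blast
  qed
qed simp

lemma permutes_word_exists:
  assumes "\<sigma> permutes {1..L}"
  shows "\<exists>w. set w \<subseteq> {1..<L} \<and> word_perm w = \<sigma>"
  using assms finite_atLeastAtMost
proof (induction rule: permutes_induct)
  case id
  show ?case by (intro exI[of _ "[]"]) simp
next
  case (swap i j p)
  obtain w where w: "set w \<subseteq> {1..<L}" "word_perm w = p"
    using swap.IH by blast
  obtain v where v: "set v \<subseteq> {1..<L}" "word_perm v = Transposition.transpose i j"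
    using transpose_word_exists[of i j L] transpose_word_exists[of j i L] swap.hyps
    by (cases "i < j") (auto simp: transpose_commute)
  show ?case
    using w v by (intro exI[of _ "w @ v"]) (auto simp: word_perm_append)
qed

lemma Rsigma_eq_Rword:
  assumes "\<sigma> permutes {1..L}"
  obtains w where "set w \<subseteq> {1..<L}" "word_perm w = \<sigma>" "Rsigma a b c L xi \<sigma> = Rword a b c {1..L} xi w"
proof -
  obtain w0 where "set w0 \<subseteq> {1..<L} \<and> word_perm w0 = \<sigma>"
    using permutes_word_exists[OF assms] by blast
  then have "\<exists>w. reduced_word L w \<sigma>"
    unfolding reduced_word_def
    using ex_has_least_nat[of "\<lambda>w. set w \<subseteq> {1..<L} \<and> word_perm w = \<sigma>" w0 length] by blast
  then have "reduced_word L (SOME w. reduced_word L w \<sigma>) \<sigma>"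
    by (rule someI_ex)
  then show ?thesis
    by (intro that[of "SOME w. reduced_word L w \<sigma>"]) (auto simp: reduced_word_def Rsigma_def)
qed

section \<open>Triangularity of the twisted D\<close>

lemma Rloc_nonzero: "Rloc a b c x y k v m h \<noteq> 0 \<Longrightarrow> (m = k \<and> h = v) \<or> (m = v \<and> h = k)"
  unfolding Rloc_def by (auto split: if_splits)

abbreviation descending_on :: "state \<Rightarrow> (nat \<times> complex) list \<Rightarrow> bool" where
  "descending_on s ch \<equiv> sorted_wrt (\<lambda>(j, _) (j', _). s j' \<le> s j) ch"

lemma descending_on_fun_upd:
  "descending_on s ch \<Longrightarrow> j \<notin> fst ` set ch \<Longrightarrow> descending_on (s(j := h)) ch"
  by (erule sorted_wrt_mono_rel[rotated]) (auto simp: image_iff split: prod.splits)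

lemma monodromy_entry_upper_vanish:
  assumes "finite I"
  shows "distinct (map fst ch) \<Longrightarrow> fst ` set ch \<subseteq> I \<Longrightarrow> descending_on s ch \<Longrightarrow>
    (\<forall>(j, x)\<in>set ch. s j \<le> k) \<Longrightarrow> k < l \<Longrightarrow> s \<in> states I \<Longrightarrow>
    monodromy_entry a b c mu I ch k l s t = 0"
proof (induction ch arbitrary: k s)
  case (Cons jx ch)
  obtain j x where jx: "jx = (j, x)" by fastforce
  have j: "j \<in> I" "j \<notin> fst ` set ch" using Cons.prems jx by auto
  have desc: "descending_on s ch" using Cons.prems(3) by simp
  have term_zero: "Rloc a b c mu x k (s j) m h * monodromy_entry a b c mu I ch m l (s(j := h)) t = 0"
    if "m \<in> {1,2,3}" "h \<in> {1,2,3}" for m h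
  proof (cases "Rloc a b c mu x k (s j) m h = 0")
    case False
    then have mh: "(m = k \<and> h = s j) \<or> (m = s j \<and> h = k)"
      by (rule Rloc_nonzero)
    have "monodromy_entry a b c mu I ch m l (s(j := h)) t = 0"
    proof (rule Cons.IH)
      show "\<forall>(j', x')\<in>set ch. (s(j := h)) j' \<le> m"
        using Cons.prems(3,4) j(2) mh jx by (force simp: image_iff)
      show "descending_on (s(j := h)) ch"
        by (rule descending_on_fun_upd[OF desc j(2)])
      show "s(j := h) \<in> states I"
        by (rule fun_upd_in_states[OF Cons.prems(6) j(1) that(2)])
      show "m < l"
        using Cons.prems(4,5) jx mh by auto
    qed (use Cons.prems in auto)
    then show ?thesis by simp
  qed simp
  show ?case
    unfolding jx monodromy_entry_Cons_apply[OF assms j(1) Cons.prems(6)]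
    by (intro sum.neutral ballI term_zero)
qed simp

lemma monodromy_entry_diagonal:
  assumes "finite I"
  shows "distinct (map fst ch) \<Longrightarrow> fst ` set ch \<subseteq> I \<Longrightarrow> descending_on s ch \<Longrightarrow>
    s \<in> states I \<Longrightarrow> t \<in> states I \<Longrightarrow>
    monodromy_entry a b c mu I ch 3 3 s t =
      (if s = t then prod_list (map (\<lambda>(j, x). Rloc a b c mu x 3 (s j) 3 (s j)) ch) else 0)"
proof (induction ch)
  case Nil
  then show ?case by (simp add: opid_def)
next
  case (Cons jx ch)
  obtain j x where jx: "jx = (j, x)" by fastforce
  have j: "j \<in> I" "j \<notin> fst ` set ch" using Cons.prems jx by auto
  have desc: "descending_on s ch" using Cons.prems(3) by simp
  have sj: "s j \<in> {1,2,3}" using states_range[OF Cons.prems(4) j(1)] .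
  have term_zero: "Rloc a b c mu x 3 (s j) m h * monodromy_entry a b c mu I ch m 3 (s(j := h)) t = 0"
    if "m \<in> {1,2,3}" "h \<in> {1,2,3}" "\<not> (m = 3 \<and> h = s j)" for m h
  proof (cases "Rloc a b c mu x 3 (s j) m h = 0")
    case False
    then have mh: "m = s j \<and> h = 3 \<and> s j < 3"
      using Rloc_nonzero[OF False] that sj by auto
    have "monodromy_entry a b c mu I ch m 3 (s(j := h)) t = 0"
    proof (rule monodromy_entry_upper_vanish[OF assms])
      show "\<forall>(j', x')\<in>set ch. (s(j := h)) j' \<le> m"
        using Cons.prems(3) j(2) mh jx by (force simp: image_iff)
      show "descending_on (s(j := h)) ch"
        by (rule descending_on_fun_upd[OF desc j(2)])
      show "s(j := h) \<in> states I"
        by (rule fun_upd_in_states[OF Cons.prems(4) j(1) that(2)])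
    qed (use Cons.prems mh in auto)
    then show ?thesis by simp
  qed simp
  have "monodromy_entry a b c mu I (jx # ch) 3 3 s t =
      Rloc a b c mu x 3 (s j) 3 (s j) * monodromy_entry a b c mu I ch 3 3 (s(j := s j)) t"
    unfolding jx monodromy_entry_Cons_apply[OF assms j(1) Cons.prems(4)]
    by (rule sum2_single[OF _ sj term_zero]) simp_all
  then show ?case
    using Cons.IH Cons.prems jx by simp
qed

lemma admissible_mono:
  assumes "admissible L \<sigma> s" "\<sigma> permutes {1..L}" "i \<le> i'" "1 \<le> i" "i' \<le> L"
  shows "s (\<sigma> i) \<le> s (\<sigma> i')"
  using assms(3-5)
proof (induction i' rule: dec_induct)
  case (step n)
  have n: "n \<in> {1..<L}" using step by auto
  have "\<sigma> n \<noteq> \<sigma> (Suc n)"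
    using permutes_inj[OF assms(2)] by (metis inj_eq n_not_Suc_n)
  then have "s (\<sigma> n) \<le> s (\<sigma> (Suc n))"
    using assms(1) n unfolding admissible_def by (metis less_imp_le linorder_neqE_nat)
  then show ?case using step by simp
qed simp

lemma descending_on_twisted_chain:
  assumes "admissible L \<sigma> s" "\<sigma> permutes {1..L}"
  shows "descending_on s (twisted_chain xi \<sigma> L)"
proof -
  have "sorted_wrt (\<lambda>i i'. s (\<sigma> i) \<le> s (\<sigma> i')) [1..<Suc L]"
    using sorted_wrt_upt[of 1 "Suc L"]
    by (rule sorted_wrt_mono_rel[rotated]) (auto intro: admissible_mono[OF assms])
  then show ?thesis by (simp add: twisted_chain_def sorted_wrt_map sorted_wrt_rev)
qed

lemma prod_list_twisted_chain:
  assumes "\<sigma> permutes {1..L}" "s \<in> states {1..L}"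
  shows "prod_list (map (\<lambda>(j, x). Rloc a b c mu x 3 (s j) 3 (s j)) (twisted_chain xi \<sigma> L)) =
    (\<Prod>i\<in>{1..L}. diagloc a b mu (xi i) (s i))"
proof -
  let ?g = "\<lambda>j. Rloc a b c mu (xi j) 3 (s j) 3 (s j)"
  have "prod_list (map (\<lambda>(j, x). Rloc a b c mu x 3 (s j) 3 (s j)) (twisted_chain xi \<sigma> L)) =
      prod_list (map (?g \<circ> \<sigma>) (rev [1..<Suc L]))"
    by (simp add: twisted_chain_def comp_def)
  also have "\<dots> = prod (?g \<circ> \<sigma>) (set (rev [1..<Suc L]))"
    by (rule prod.distinct_set_conv_list[symmetric]) simp
  also have "\<dots> = prod (?g \<circ> \<sigma>) {1..L}"
    by (simp only: set_rev set_upt atLeastLessThanSuc_atLeastAtMost)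
  also have "\<dots> = prod ?g {1..L}"
    by (rule prod.permute[OF assms(1), symmetric])
  also have "\<dots> = (\<Prod>i\<in>{1..L}. diagloc a b mu (xi i) (s i))"
    using states_range[OF assms(2)] by (intro prod.cong refl) (auto simp: Rloc_def diagloc_def)
  finally show ?thesis .
qed

lemma monodromy_entry_twisted_chain:
  assumes "\<sigma> permutes {1..L}" "admissible L \<sigma> s" "s \<in> states {1..L}" "t \<in> states {1..L}"
  shows "monodromy_entry a b c mu {1..L} (twisted_chain xi \<sigma> L) 3 3 s t =
    (if s = t then \<Prod>i\<in>{1..L}. diagloc a b mu (xi i) (s i) else 0)"
proof -
  have "map fst (twisted_chain xi \<sigma> L) = map \<sigma> (rev [1..<Suc L])"
    by (simp add: twisted_chain_def)
  moreover have "inj_on \<sigma> (set (rev [1..<Suc L]))"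
    using permutes_inj[OF assms(1)] by (rule inj_on_subset) simp
  ultimately have "distinct (map fst (twisted_chain xi \<sigma> L))"
    by (simp add: distinct_map)
  moreover have "fst ` set (twisted_chain xi \<sigma> L) \<subseteq> {1..L}"
    using permutes_image[OF assms(1)] by (auto simp: twisted_chain_def atLeastLessThanSuc_atLeastAtMost)
  ultimately have "monodromy_entry a b c mu {1..L} (twisted_chain xi \<sigma> L) 3 3 s t =
      (if s = t then prod_list (map (\<lambda>(j, x). Rloc a b c mu x 3 (s j) 3 (s j)) (twisted_chain xi \<sigma> L)) else 0)"
    by (intro monodromy_entry_diagonal descending_on_twisted_chain assms) simp_all
  then show ?thesis
    unfolding prod_list_twisted_chain[OF assms(1,3)] .
qed

section \<open>The factorizing twist diagonalizes D\<close>

lemma Rsigma_Dop_admissible: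
  assumes "YBE a b c" "\<sigma> permutes {1..L}" "admissible L \<sigma> s" "s \<in> states {1..L}" "t \<in> states {1..L}"
  shows "opmult {1..L} (Rsigma a b c L xi \<sigma>) (Dop a b c L xi mu) s t =
    (\<Prod>i\<in>{1..L}. diagloc a b mu (xi i) (s i)) * Rsigma a b c L xi \<sigma> s t"
proof -
  let ?I = "{1..L}"
  let ?E = "monodromy_entry a b c mu ?I (twisted_chain xi \<sigma> L) 3 3"
  obtain w where w: "set w \<subseteq> {1..<L}" "word_perm w = \<sigma>" and R: "Rsigma a b c L xi \<sigma> = Rword a b c ?I xi w"
    using Rsigma_eq_Rword[OF assms(2)] by metis
  have "opeq ?I (opmult ?I (Rsigma a b c L xi \<sigma>) (Dop a b c L xi mu))
      (opmult ?I (Rword a b c ?I xi w) (monodromy_entry a b c mu ?I (site_chain xi id L) 3 3))"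
    unfolding R by (rule opeq_opmult[OF opeq_refl Dop_opeq_monodromy_entry])
  also have "opeq ?I \<dots> (opmult ?I ?E (Rsigma a b c L xi \<sigma>))"
    using Rword_monodromy_entry[OF assms(1) w(1), of 3 3 xi mu] by (simp add: R w(2))
  finally have "opmult ?I (Rsigma a b c L xi \<sigma>) (Dop a b c L xi mu) s t = opmult ?I ?E (Rsigma a b c L xi \<sigma>) s t"
    using assms(4,5) by (simp add: opeq_def)
  also have "\<dots> = (\<Sum>u\<in>states ?I. (if s = u then \<Prod>i\<in>{1..L}. diagloc a b mu (xi i) (s i) else 0) * Rsigma a b c L xi \<sigma> u t)"
    unfolding opmult_def using monodromy_entry_twisted_chain[OF assms(2,3,4)] by (intro sum.cong) auto
  also have "\<dots> = (\<Prod>i\<in>{1..L}. diagloc a b mu (xi i) (s i)) * Rsigma a b c L xi \<sigma> s t"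
    using assms(4) by (simp add: if_distrib[of "\<lambda>v. v * _"] finite_states cong: if_cong)
  finally show ?thesis .
qed

lemma Fop_apply:
  assumes "s \<in> states {1..L}"
  shows "Fop a b c L xi s u =
    (\<Sum>\<sigma>\<in>{\<sigma>. \<sigma> permutes {1..L}}. if admissible L \<sigma> s then Rsigma a b c L xi \<sigma> s u else 0)"
proof -
  have "(\<Sum>al\<in>{al \<in> states {1..L}. admissible L \<sigma> al}. opmult {1..L} (proj al) (Rsigma a b c L xi \<sigma>) s u) =
      (\<Sum>al\<in>{al \<in> states {1..L}. admissible L \<sigma> al}. if al = s then Rsigma a b c L xi \<sigma> s u else 0)" for \<sigma>
    using assms by (intro sum.cong refl) (simp add: opmult_def proj_def finite_states if_distrib[of "\<lambda>v. v * _"] cong: if_cong)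
  also have "\<dots> \<sigma> = (if admissible L \<sigma> s then Rsigma a b c L xi \<sigma> s u else 0)" for \<sigma>
    using assms by (simp add: sum.delta' finite_states)
  finally show ?thesis
    unfolding Fop_def by simp
qed

theorem mainTheorem3:
  fixes a :: "nat \<Rightarrow> complex \<Rightarrow> complex \<Rightarrow> complex"
    and b c :: "nat \<Rightarrow> nat \<Rightarrow> complex \<Rightarrow> complex \<Rightarrow> complex"
    and xi :: "nat \<Rightarrow> complex" and mu :: complex and L :: nat
  assumes "L \<ge> 1"
    and "YBE a b c"
    and "unitary_R a b c"
  shows "opeq {1..L}
           (opmult {1..L} (Fop a b c L xi) (Dop a b c L xi mu))
           (opmult {1..L} (Diagop a b L xi mu) (Fop a b c L xi))"
  unfolding opeq_def
proof (intro ballI)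
  fix s t assume s: "s \<in> states {1..L}" and t: "t \<in> states {1..L}"
  let ?I = "{1..L}"
  let ?P = "{\<sigma>. \<sigma> permutes {1..L}}"
  let ?d = "\<Prod>i\<in>{1..L}. diagloc a b mu (xi i) (s i)"
  have "opmult ?I (Fop a b c L xi) (Dop a b c L xi mu) s t =
      (\<Sum>\<sigma>\<in>?P. if admissible L \<sigma> s then opmult ?I (Rsigma a b c L xi \<sigma>) (Dop a b c L xi mu) s t else 0)"
    unfolding opmult_def Fop_apply[OF s] sum_distrib_right
    by (subst sum.swap) (simp add: if_distrib[of "\<lambda>v. v * _"] sum_if_zero cong: if_cong)
  also have "\<dots> = (\<Sum>\<sigma>\<in>?P. if admissible L \<sigma> s then ?d * Rsigma a b c L xi \<sigma> s t else 0)"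
    using Rsigma_Dop_admissible[OF assms(2) _ _ s t] by (intro sum.cong refl) auto
  also have "\<dots> = ?d * Fop a b c L xi s t"
    unfolding Fop_apply[OF s] sum_distrib_left mult_if_zero_right ..
  also have "\<dots> = opmult ?I (Diagop a b L xi mu) (Fop a b c L xi) s t"
    using s by (simp add: opmult_def Diagop_def finite_states if_distrib[of "\<lambda>v. v * _"] cong: if_cong)
  finally show "opmult ?I (Fop a b c L xi) (Dop a b c L xi mu) s t = opmult ?I (Diagop a b L xi mu) (Fop a b c L xi) s t" .
qed

end
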